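(* Let $X$ be a nonempty set and $f: X \to X$ a map. For $k \ge 1$ let $E^k = X - f^k(X)$, let $E = E^1$, and let $E^\infty = \bigcup_{k>0} E^k$. Suppose $E$ is finite and that there is no $K>0$ with $E^K = E^\infty$. Then there exists a point $e \in E$ such that the points $f^k(e)$, $k > 0$, all belong to $E^\infty$ and are pairwise distinct. Moreover, for any such $e$ there is a positive integer $M(e)$ such that for every $k \ge M(e)$ the equation $f(x) = f^k(e)$ has exactly one solution $x\in X$, namely $x = f^{k-1}(e)$.
   Context: $f^0=\mathrm{Id}$ and $f^{k+1} = f\circ f^k$. No topology or algebraic structure is assumed on $X$. *)

theory Defs
  imports Main
begin

definition Eset :: "'a set \<Rightarrow> ('a \<Rightarrow> 'a) \<Rightarrow> nat \<Rightarrow> 'a set" where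
  "Eset X f k = X - (f ^^ k) ` X"

definition Einf :: "'a set \<Rightarrow> ('a \<Rightarrow> 'a) \<Rightarrow> 'a set" where
  "Einf X f = (\<Union>k\<in>{0<..}. Eset X f k)"

end

theory Submission
  imports Defs
begin

text \<open>Every point of X outside some f^n(X) lies on the forward orbit of a point of E, and
  E^\<infinity> is closed under f-preimages in X. If E^\<infinity> were finite it would equal some E^K;
  so it is infinite, and since E is finite, infinitely many of its points lie on the orbit of
  a single e \<in> E. That orbit is then infinite, hence injective, and backward closure puts it
  entirely into E^\<infinity>. For the second part, a preimage x \<noteq> f^(k-1)(e) of f^k(e) lies in
  E^\<infinity>, hence on the orbit of some e' \<in> E; injectivity of the orbit of e lets each e'
  account for at most one such k, so by finiteness of E only finitely many k are exceptional.\<close>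

lemma funpow_add_apply: "(f ^^ (m + n)) x = (f ^^ m) ((f ^^ n) x)"
  by (simp add: funpow_add)

lemma funpow_closed: "f ` X \<subseteq> X \<Longrightarrow> x \<in> X \<Longrightarrow> (f ^^ n) x \<in> X"
  by (induction n) auto

lemma funpow_image_antimono:
  assumes "f ` X \<subseteq> X" "m \<le> n"
  shows "(f ^^ n) ` X \<subseteq> (f ^^ m) ` X"
proof
  fix y assume "y \<in> (f ^^ n) ` X"
  then obtain x where x: "x \<in> X" "y = (f ^^ n) x" by auto
  then have "y = (f ^^ m) ((f ^^ (n - m)) x)"
    using \<open>m \<le> n\<close> by (simp flip: funpow_add_apply)
  with funpow_closed[OF assms(1) x(1)] show "y \<in> (f ^^ m) ` X" by blast
qed

lemma Eset_mono: "f ` X \<subseteq> X \<Longrightarrow> m \<le> n \<Longrightarrow> Eset X f m \<subseteq> Eset X f n"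
  unfolding Eset_def using funpow_image_antimono by blast

lemma Eset_funpow_preimage:
  assumes "y \<in> X" "(f ^^ d) y \<in> Eset X f (d + n)"
  shows "y \<in> Eset X f n"
proof -
  have "y \<notin> (f ^^ n) ` X"
  proof
    assume "y \<in> (f ^^ n) ` X"
    then obtain z where "z \<in> X" "y = (f ^^ n) z" by auto
    then have "(f ^^ d) y \<in> (f ^^ (d + n)) ` X" by (simp add: funpow_add)
    with assms(2) show False unfolding Eset_def by blast
  qed
  with assms(1) show ?thesis unfolding Eset_def by blast
qed

lemma Einf_funpow_preimage:
  assumes "f ` X \<subseteq> X" "y \<in> X" "(f ^^ d) y \<in> Einf X f"
  shows "y \<in> Einf X f"
proof -
  obtain n where n: "n > 0" "(f ^^ d) y \<in> Eset X f n"
    using assms(3) unfolding Einf_def by auto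
  then have "(f ^^ d) y \<in> Eset X f (d + n)"
    using Eset_mono[OF assms(1), of n "d + n"] by auto
  then have "y \<in> Eset X f n"
    by (rule Eset_funpow_preimage[OF assms(2)])
  with n(1) show ?thesis unfolding Einf_def by auto
qed

lemma on_orbit_of_Eset_if_not_in_funpow_image:
  assumes "f ` X \<subseteq> X" "y \<in> X" "y \<notin> (f ^^ n) ` X"
  shows "\<exists>e\<in>Eset X f 1. \<exists>i. y = (f ^^ i) e"
  using assms(2,3)
proof (induction n arbitrary: y)
  case 0
  then show ?case by simp
next
  case (Suc n)
  show ?case
  proof (cases "y \<in> Eset X f 1")
    case True
    then show ?thesis by (metis funpow_0)
  next
    case False
    then obtain z where z: "z \<in> X" "y = f z"
      using Suc.prems(1) unfolding Eset_def by auto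
    with Suc.prems(2) have "z \<notin> (f ^^ n) ` X" by auto
    with Suc.IH[OF z(1)] obtain e i where "e \<in> Eset X f 1" "z = (f ^^ i) e" by blast
    with z(2) have "y = (f ^^ Suc i) e" by simp
    with \<open>e \<in> Eset X f 1\<close> show ?thesis by blast
  qed
qed

lemma Einf_subset_orbits:
  assumes "f ` X \<subseteq> X"
  shows "Einf X f \<subseteq> (\<Union>e\<in>Eset X f 1. range (\<lambda>i. (f ^^ i) e))"
proof
  fix y assume "y \<in> Einf X f"
  then obtain n where "y \<in> X" "y \<notin> (f ^^ n) ` X" unfolding Einf_def Eset_def by auto
  then obtain e i where "e \<in> Eset X f 1" "y = (f ^^ i) e"
    using on_orbit_of_Eset_if_not_in_funpow_image[OF assms] by blast
  then show "y \<in> (\<Union>e\<in>Eset X f 1. range (\<lambda>i. (f ^^ i) e))" by blast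
qed

lemma Eset_eq_Einf_if_finite:
  assumes "f ` X \<subseteq> X" "finite (Einf X f)"
  shows "\<exists>K>0. Eset X f K = Einf X f"
proof -
  obtain g where g: "\<And>y. y \<in> Einf X f \<Longrightarrow> g y > 0 \<and> y \<in> Eset X f (g y)"
    unfolding Einf_def by (metis UN_E greaterThan_iff)
  obtain m where m: "\<And>y. y \<in> Einf X f \<Longrightarrow> g y \<le> m"
    using assms(2) finite_nat_set_iff_bounded_le[of "g ` Einf X f"] by auto
  have "Einf X f \<subseteq> Eset X f (Suc m)"
  proof
    fix y assume "y \<in> Einf X f"
    with g m Eset_mono[OF assms(1), of "g y" "Suc m"] show "y \<in> Eset X f (Suc m)"
      by (meson le_SucI subsetD)
  qed
  moreover have "Eset X f (Suc m) \<subseteq> Einf X f" unfolding Einf_def by auto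
  ultimately show ?thesis by blast
qed

lemma orbit_eq_initial_segment:
  fixes f :: "'a \<Rightarrow> 'a"
  assumes "(f ^^ a) x = (f ^^ b) x" "a < b"
  shows "range (\<lambda>n. (f ^^ n) x) = (\<lambda>n. (f ^^ n) x) ` {..<b}"
proof -
  have "(f ^^ n) x \<in> (\<lambda>n. (f ^^ n) x) ` {..<b}" for n
  proof (induction n rule: less_induct)
    case (less n)
    show ?case
    proof (cases "n < b")
      case False
      then have "(f ^^ n) x = (f ^^ (n - b)) ((f ^^ b) x)" by (simp flip: funpow_add_apply)
      also have "\<dots> = (f ^^ (n - b + a)) x" by (simp only: funpow_add_apply assms(1))
      finally show ?thesis using less.IH[of "n - b + a"] False assms(2) by simp
    qed auto
  qed
  then show ?thesis by auto
qed

lemma inj_orbit_if_infinite: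
  fixes f :: "'a \<Rightarrow> 'a"
  assumes "infinite (range (\<lambda>n. (f ^^ n) x))"
  shows "inj (\<lambda>n. (f ^^ n) x)"
proof (rule linorder_inj_onI')
  fix a b :: nat assume "a < b"
  show "(f ^^ a) x \<noteq> (f ^^ b) x"
  proof
    assume "(f ^^ a) x = (f ^^ b) x"
    then have "range (\<lambda>n. (f ^^ n) x) = (\<lambda>n. (f ^^ n) x) ` {..<b}"
      using \<open>a < b\<close> by (rule orbit_eq_initial_segment)
    with assms show False by simp
  qed
qed

lemma exists_Eset_point_with_infinite_orbit_in_Einf:
  assumes "f ` X \<subseteq> X" "finite (Eset X f 1)" "infinite (Einf X f)"
  shows "\<exists>e\<in>Eset X f 1. infinite (Einf X f \<inter> range (\<lambda>i. (f ^^ i) e))"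
proof (rule ccontr)
  assume "\<not> ?thesis"
  then have "finite (\<Union>e\<in>Eset X f 1. Einf X f \<inter> range (\<lambda>i. (f ^^ i) e))"
    using assms(2) by blast
  moreover have "Einf X f = (\<Union>e\<in>Eset X f 1. Einf X f \<inter> range (\<lambda>i. (f ^^ i) e))"
    using Einf_subset_orbits[OF assms(1)] by blast
  ultimately show False using assms(3) by simp
qed

lemma orbit_in_Einf_if_infinitely_often:
  assumes "f ` X \<subseteq> X" "e \<in> X" "infinite (Einf X f \<inter> range (\<lambda>i. (f ^^ i) e))"
  shows "(f ^^ k) e \<in> Einf X f"
proof -
  have "\<not> Einf X f \<inter> range (\<lambda>i. (f ^^ i) e) \<subseteq> (\<lambda>i. (f ^^ i) e) ` {..<k}"
  proof
    assume "Einf X f \<inter> range (\<lambda>i. (f ^^ i) e) \<subseteq> (\<lambda>i. (f ^^ i) e) ` {..<k}"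
    then have "finite (Einf X f \<inter> range (\<lambda>i. (f ^^ i) e))" by (rule finite_subset) simp
    with assms(3) show False by contradiction
  qed
  then obtain m where "(f ^^ m) e \<in> Einf X f" "\<not> m < k" by auto
  then have "(f ^^ (m - k)) ((f ^^ k) e) \<in> Einf X f" by (simp flip: funpow_add_apply)
  then show ?thesis by (rule Einf_funpow_preimage[OF assms(1) funpow_closed[OF assms(1,2)]])
qed

lemma funpow_pred_eq_after_merge:
  fixes f :: "'a \<Rightarrow> 'a"
  assumes inj: "inj_on (\<lambda>k. (f ^^ k) e) {0<..}" and "0 < k1" "k1 < k2"
    and merge1: "(f ^^ Suc i1) e' = (f ^^ k1) e"
    and merge2: "(f ^^ Suc i2) e' = (f ^^ k2) e"
  shows "(f ^^ i2) e' = (f ^^ (k2 - 1)) e"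
proof -
  have "(f ^^ (Suc i1 + k2)) e = (f ^^ (Suc i1 + Suc i2)) e'"
    by (simp only: funpow_add_apply merge2)
  also have "\<dots> = (f ^^ (Suc i2 + Suc i1)) e'" by (simp add: add.commute)
  also have "\<dots> = (f ^^ (Suc i2 + k1)) e" by (simp only: funpow_add_apply merge1)
  finally have "Suc i1 + k2 = Suc i2 + k1"
    by (rule inj_onD[OF inj]) (use \<open>0 < k1\<close> in auto)
  then have "i2 = (k2 - k1 - 1) + Suc i1" using \<open>k1 < k2\<close> by simp
  then have "(f ^^ i2) e' = (f ^^ (k2 - k1 - 1)) ((f ^^ k1) e)"
    by (simp only: funpow_add_apply merge1)
  also have "\<dots> = (f ^^ (k2 - 1)) e" using assms(2,3) by (simp flip: funpow_add_apply)
  finally show ?thesis .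
qed

lemma finite_exceptional_preimages:
  assumes "f ` X \<subseteq> X" "finite (Eset X f 1)"
    and in_Einf: "\<forall>k>0. (f ^^ k) e \<in> Einf X f" and inj: "inj_on (\<lambda>k. (f ^^ k) e) {0<..}"
  shows "finite {k. 0 < k \<and> (\<exists>x\<in>X. f x = (f ^^ k) e \<and> x \<noteq> (f ^^ (k - 1)) e)}"
proof -
  define entries where "entries e' =
    {k. 0 < k \<and> (\<exists>i. (f ^^ Suc i) e' = (f ^^ k) e \<and> (f ^^ i) e' \<noteq> (f ^^ (k - 1)) e)}" for e'
  have entries_le: "\<not> k0 < k" if "k0 \<in> entries e'" "k \<in> entries e'" for e' k0 k
  proof
    assume "k0 < k"
    from that obtain i0 i where "0 < k0" and merge0: "(f ^^ Suc i0) e' = (f ^^ k0) e"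
      and merge: "(f ^^ Suc i) e' = (f ^^ k) e" and "(f ^^ i) e' \<noteq> (f ^^ (k - 1)) e"
      unfolding entries_def by blast
    with funpow_pred_eq_after_merge[OF inj \<open>0 < k0\<close> \<open>k0 < k\<close> merge0 merge] show False
      by blast
  qed
  have finite_entries: "finite (entries e')" for e'
  proof (cases "entries e' = {}")
    case False
    then obtain k0 where "k0 \<in> entries e'" by blast
    have "entries e' \<subseteq> {k0}"
    proof
      fix k assume "k \<in> entries e'"
      with entries_le \<open>k0 \<in> entries e'\<close> have "k = k0" by (meson linorder_neqE_nat)
      then show "k \<in> {k0}" by simp
    qed
    then show ?thesis by (rule finite_subset) simp
  qed simp
  have "{k. 0 < k \<and> (\<exists>x\<in>X. f x = (f ^^ k) e \<and> x \<noteq> (f ^^ (k - 1)) e)}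
      \<subseteq> (\<Union>e'\<in>Eset X f 1. entries e')"
  proof clarify
    fix k x assume k: "0 < k" "x \<in> X" "f x = (f ^^ k) e" "x \<noteq> (f ^^ (k - 1)) e"
    then have "(f ^^ 1) x \<in> Einf X f" using in_Einf by simp
    then have "x \<in> Einf X f" by (rule Einf_funpow_preimage[OF assms(1) k(2)])
    then obtain e' i where e': "e' \<in> Eset X f 1" and x: "x = (f ^^ i) e'"
      using Einf_subset_orbits[OF assms(1)] by blast
    have "(f ^^ Suc i) e' = (f ^^ k) e" using k(3) x by simp
    with k(1,4) x have "k \<in> entries e'" unfolding entries_def by blast
    with e' show "k \<in> (\<Union>e'\<in>Eset X f 1. entries e')" by (rule UN_I)
  qed
  moreover have "finite (\<Union>e'\<in>Eset X f 1. entries e')"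
    using assms(2) finite_entries by (rule finite_UN_I)
  ultimately show ?thesis by (rule finite_subset)
qed

lemma eventually_unique_preimage:
  assumes "f ` X \<subseteq> X" "finite (Eset X f 1)" "e \<in> X"
    and "\<forall>k>0. (f ^^ k) e \<in> Einf X f" "inj_on (\<lambda>k. (f ^^ k) e) {0<..}"
  shows "\<exists>M>0. \<forall>k\<ge>M. {x\<in>X. f x = (f ^^ k) e} = {(f ^^ (k - 1)) e}"
proof -
  obtain m where bound: "\<forall>k\<in>{k. 0 < k \<and> (\<exists>x\<in>X. f x = (f ^^ k) e \<and> x \<noteq> (f ^^ (k - 1)) e)}. k \<le> m"
    using finite_exceptional_preimages[OF assms(1,2,4,5)] finite_nat_set_iff_bounded_le by blast
  have m: "x = (f ^^ (k - 1)) e" if "m < k" "x \<in> X" "f x = (f ^^ k) e" for k x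
  proof (rule ccontr)
    assume "x \<noteq> (f ^^ (k - 1)) e"
    with that have "k \<in> {k. 0 < k \<and> (\<exists>x\<in>X. f x = (f ^^ k) e \<and> x \<noteq> (f ^^ (k - 1)) e)}"
      by auto
    then have "k \<le> m" using bound by blast
    with \<open>m < k\<close> show False by simp
  qed
  have "{x\<in>X. f x = (f ^^ k) e} = {(f ^^ (k - 1)) e}" if "Suc m \<le> k" for k
  proof -
    have "f ((f ^^ (k - 1)) e) = (f ^^ Suc (k - 1)) e" by simp
    with that have "f ((f ^^ (k - 1)) e) = (f ^^ k) e" by (simp add: Suc_diff_le)
    with funpow_closed[OF assms(1,3)] m[of k] that show ?thesis by auto
  qed
  then show ?thesis by blast
qed

theorem lemma1:
  fixes X :: "'a set" and f :: "'a \<Rightarrow> 'a"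
  assumes "X \<noteq> {}"
    and "f ` X \<subseteq> X"
    and "finite (Eset X f 1)"
    and "\<not> (\<exists>K>0. Eset X f K = Einf X f)"
  shows "(\<exists>e\<in>Eset X f 1. (\<forall>k>0. (f ^^ k) e \<in> Einf X f)
            \<and> inj_on (\<lambda>k. (f ^^ k) e) {0<..})
    \<and> (\<forall>e\<in>Eset X f 1. ((\<forall>k>0. (f ^^ k) e \<in> Einf X f)
            \<and> inj_on (\<lambda>k. (f ^^ k) e) {0<..})
         \<longrightarrow> (\<exists>M>0. \<forall>k\<ge>M. {x\<in>X. f x = (f ^^ k) e} = {(f ^^ (k - 1)) e}))"
proof (intro conjI ballI impI)
  have "infinite (Einf X f)" using Eset_eq_Einf_if_finite assms(2,4) by blast
  then obtain e where e: "e \<in> Eset X f 1" and inf: "infinite (Einf X f \<inter> range (\<lambda>i. (f ^^ i) e))"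
    using exists_Eset_point_with_infinite_orbit_in_Einf assms(2,3) by blast
  have "inj (\<lambda>i. (f ^^ i) e)" using inf by (intro inj_orbit_if_infinite) auto
  moreover have "(f ^^ k) e \<in> Einf X f" for k
    using orbit_in_Einf_if_infinitely_often[OF assms(2) _ inf] e unfolding Eset_def by blast
  ultimately show "\<exists>e\<in>Eset X f 1. (\<forall>k>0. (f ^^ k) e \<in> Einf X f) \<and> inj_on (\<lambda>k. (f ^^ k) e) {0<..}"
    using e inj_on_subset by blast
next
  fix e assume "e \<in> Eset X f 1"
    and "(\<forall>k>0. (f ^^ k) e \<in> Einf X f) \<and> inj_on (\<lambda>k. (f ^^ k) e) {0<..}"
  then show "\<exists>M>0. \<forall>k\<ge>M. {x\<in>X. f x = (f ^^ k) e} = {(f ^^ (k - 1)) e}"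
    using eventually_unique_preimage[OF assms(2,3)] unfolding Eset_def by blast
qed

end
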